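(* Let $\mathtt{a}\in\Sigma$. For every $k\in\mathbb{N}$ there exist $p,q\in\mathbb{N}$ with $p\neq q$ such that $\mathtt{a}^p \equiv_k \mathtt{a}^q$.
   Context: $\Sigma$ is a fixed finite alphabet. For $w \in \Sigma^*$, $\mathsf{Facs}(w)$ is the set of all factors (contiguous subwords, including $\varepsilon$ and $w$) of $w$. The structure $\mathfrak{A}_w$ representing $w$ has universe $\mathsf{Facs}(w)\cup\{\perp\}$, a ternary relation $R_\circ=\{(x,y,z)\in\mathsf{Facs}(w)^3 : x=y\cdot z\}$, for each letter $\mathtt{a}\in\Sigma$ a constant interpreted as $\mathtt{a}$ if $\mathtt{a}$ occurs in $w$ and as $\perp$ otherwise, and a constant $\varepsilon$ interpreted as the empty word. The $k$-round Ehrenfeucht–Fraïssé game on $\mathfrak{A}_w,\mathfrak{A}_v$: in each round $i$, Spoiler picks one of the two structures and an element of its universe, Duplicator answers with an element of the other structure's universe; let $a_i$ (in $\mathfrak{A}_w$) and $b_i$ (in $\mathfrak{A}_v$) be the chosen elements. Duplicator wins if the tuples $(a_1,\dots,a_k,\vec c^{\,\mathfrak{A}_w})$ and $(b_1,\dots,b_k,\vec c^{\,\mathfrak{A}_v})$, where $\vec c$ lists the interpretations of all constants, form a partial isomorphism: for all indices $i,j,l$, $a_i$ equals the interpretation of a constant $c$ iff $b_i$ equals the interpretation of $c$; $a_i=a_j$ iff $b_i=b_j$; and $a_i=a_j\cdot a_l$ iff $b_i=b_j\cdot b_l$. We write $w\equiv_k v$ if Duplicator has a winning strategy in the $k$-round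 game. *)

theory Defs
  imports Main
begin

text \<open>The alphabet Sigma is the (finite) type 'a. Words are lists over 'a.
Elements of the structure A_w are encoded as 'a list option: Some u is the
factor u, None is the extra element bot.\<close>

definition facs :: "'a list \<Rightarrow> 'a list set" where
  "facs w = {u. \<exists>x y. w = x @ u @ y}"

definition univ :: "'a list \<Rightarrow> 'a list option set" where
  "univ w = Some ` facs w \<union> {None}"

text \<open>Constants: Some c is the letter constant c, None is the constant epsilon.\<close>
definition cinterp :: "'a list \<Rightarrow> 'a option \<Rightarrow> 'a list option" where
  "cinterp w c = (case c of
      None \<Rightarrow> Some []
    | Some a \<Rightarrow> (if a \<in> set w then Some [a] else None))"

definition ext_tuple :: "'a list \<Rightarrow> 'a list option list \<Rightarrow> nat + 'a option \<Rightarrow> 'a list option" where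
  "ext_tuple w as i = (case i of Inl n \<Rightarrow> as ! n | Inr c \<Rightarrow> cinterp w c)"

definition idx :: "nat \<Rightarrow> (nat + 'a option) set" where
  "idx n = Inl ` {..<n} \<union> range Inr"

definition Rcat :: "'a list option \<Rightarrow> 'a list option \<Rightarrow> 'a list option \<Rightarrow> bool" where
  "Rcat x y z = (\<exists>x' y' z'. x = Some x' \<and> y = Some y' \<and> z = Some z' \<and> x' = y' @ z')"

definition partial_iso :: "'a list \<Rightarrow> 'a list \<Rightarrow> 'a list option list \<Rightarrow> 'a list option list \<Rightarrow> bool" where
  "partial_iso w v as bs \<longleftrightarrow> length as = length bs \<and>
     (\<forall>i\<in>idx (length as). \<forall>j\<in>idx (length as).
        ext_tuple w as i = ext_tuple w as j \<longleftrightarrow> ext_tuple v bs i = ext_tuple v bs j) \<and>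
     (\<forall>i\<in>idx (length as). \<forall>j\<in>idx (length as). \<forall>l\<in>idx (length as).
        Rcat (ext_tuple w as i) (ext_tuple w as j) (ext_tuple w as l) \<longleftrightarrow>
        Rcat (ext_tuple v bs i) (ext_tuple v bs j) (ext_tuple v bs l))"

fun dup_wins :: "nat \<Rightarrow> 'a list \<Rightarrow> 'a list \<Rightarrow> 'a list option list \<Rightarrow> 'a list option list \<Rightarrow> bool" where
  "dup_wins 0 w v as bs = partial_iso w v as bs"
| "dup_wins (Suc k) w v as bs =
     ((\<forall>x\<in>univ w. \<exists>y\<in>univ v. dup_wins k w v (as @ [x]) (bs @ [y])) \<and>
      (\<forall>y\<in>univ v. \<exists>x\<in>univ w. dup_wins k w v (as @ [x]) (bs @ [y])))"

definition ef_equiv :: "nat \<Rightarrow> 'a list \<Rightarrow> 'a list \<Rightarrow> bool" where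
  "ef_equiv k w v = dup_wins k w v [] []"

end

theory Submission
  imports Defs "HOL-Library.FSet" "HOL-Library.Sublist"
begin

text \<open>Duplicator wins the k-round game whenever both positions have the same k-type, the tree
recording the atomic type of every position reachable in k further rounds. Over a finite alphabet
there are only finitely many k-types of positions of a given length, so by the pigeonhole principle
two of the infinitely many words \<open>a\<^sup>p\<close> share the k-type of the empty position.\<close>

datatype 'b type_tree = Leaf 'b | Branch "'b type_tree fset"

type_synonym 'a atomic_fact =
  "(nat + 'a option) \<times> (nat + 'a option) \<times> (nat + 'a option) \<times> bool \<times> bool"

definition atomic_type :: "'a list \<Rightarrow> 'a list option list \<Rightarrow> 'a atomic_fact set" where
  "atomic_type w as = {(i, j, l, e, r). i \<in> idx (length as) \<and> j \<in> idx (length as) \<and>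
      l \<in> idx (length as) \<and>
      e = (ext_tuple w as i = ext_tuple w as j) \<and>
      r = Rcat (ext_tuple w as i) (ext_tuple w as j) (ext_tuple w as l)}"

text \<open>The length of the position is part of the atomic type, since \<^const>\<open>partial_iso\<close> compares it.\<close>

fun ef_type :: "nat \<Rightarrow> 'a list \<Rightarrow> 'a list option list \<Rightarrow> (nat \<times> 'a atomic_fact set) type_tree" where
  "ef_type 0 w as = Leaf (length as, atomic_type w as)"
| "ef_type (Suc k) w as = Branch (Abs_fset ((\<lambda>x. ef_type k w (as @ [x])) ` univ w))"

lemma facs_eq_set_sublists: "facs w = set (sublists w)"
  unfolding facs_def set_sublists_eq sublist_def by blast

lemma finite_univ: "finite (univ w)"
  unfolding univ_def facs_eq_set_sublists by simp

lemma partial_iso_if_same_atomic_type: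
  assumes "length as = length bs" and "atomic_type w as = atomic_type v bs"
  shows "partial_iso w v as bs"
proof -
  have "(ext_tuple w as i = ext_tuple w as j) = (ext_tuple v bs i = ext_tuple v bs j) \<and>
        Rcat (ext_tuple w as i) (ext_tuple w as j) (ext_tuple w as l) =
        Rcat (ext_tuple v bs i) (ext_tuple v bs j) (ext_tuple v bs l)"
    if "i \<in> idx (length as)" "j \<in> idx (length as)" "l \<in> idx (length as)" for i j l
  proof -
    have "(i, j, l, ext_tuple w as i = ext_tuple w as j,
           Rcat (ext_tuple w as i) (ext_tuple w as j) (ext_tuple w as l)) \<in> atomic_type w as"
      using that unfolding atomic_type_def by simp
    then have "(i, j, l, ext_tuple w as i = ext_tuple w as j,
           Rcat (ext_tuple w as i) (ext_tuple w as j) (ext_tuple w as l)) \<in> atomic_type v bs"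
      unfolding assms(2) .
    then show ?thesis
      unfolding atomic_type_def by simp
  qed
  then show ?thesis
    unfolding partial_iso_def using assms(1) by blast
qed

lemma dup_wins_if_same_ef_type:
  "ef_type k w as = ef_type k v bs \<Longrightarrow> dup_wins k w v as bs"
proof (induction k arbitrary: as bs)
  case 0
  then show ?case
    by (simp add: partial_iso_if_same_atomic_type)
next
  case (Suc k)
  have "finite ((\<lambda>x. ef_type k w (as @ [x])) ` univ w)"
   and "finite ((\<lambda>y. ef_type k v (bs @ [y])) ` univ v)"
    by (simp_all add: finite_univ)
  with Suc.prems
  have "(\<lambda>x. ef_type k w (as @ [x])) ` univ w = (\<lambda>y. ef_type k v (bs @ [y])) ` univ v"
    using Abs_fset_inject by fastforce
  then have "\<forall>x\<in>univ w. \<exists>y\<in>univ v. ef_type k w (as @ [x]) = ef_type k v (bs @ [y])"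
        and "\<forall>y\<in>univ v. \<exists>x\<in>univ w. ef_type k w (as @ [x]) = ef_type k v (bs @ [y])"
    by (blast, blast intro: sym)
  then show ?case
    using Suc.IH by (simp, meson)
qed

text \<open>An over-approximation of the k-types of positions of length n.\<close>

fun ef_types :: "nat \<Rightarrow> nat \<Rightarrow> (nat \<times> 'a::finite atomic_fact set) type_tree set" where
  "ef_types 0 n = Leaf ` ({n} \<times> Pow (idx n \<times> idx n \<times> idx n \<times> UNIV \<times> UNIV))"
| "ef_types (Suc k) n = Branch ` Abs_fset ` Pow (ef_types k (Suc n))"

lemma finite_ef_types: "finite (ef_types k n)"
  by (induction k arbitrary: n) (simp_all add: idx_def)

lemma ef_type_in_ef_types: "ef_type k w as \<in> ef_types k (length as)"
  for w :: "'a::finite list"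
proof (induction k arbitrary: as)
  case 0
  show ?case
    by (auto simp: atomic_type_def)
next
  case (Suc k)
  have "(\<lambda>x. ef_type k w (as @ [x])) ` univ w \<subseteq> ef_types k (Suc (length as))"
    using Suc.IH[of "as @ [_]"] by auto
  then show ?case
    by auto
qed

lemma ef_equiv_pigeonhole:
  fixes f :: "nat \<Rightarrow> 'a::finite list"
  shows "\<exists>p q. p \<noteq> q \<and> ef_equiv k (f p) (f q)"
proof -
  let ?type = "\<lambda>p. ef_type k (f p) []"
  have "range ?type \<subseteq> ef_types k 0"
    using ef_type_in_ef_types[of k _ "[]"] by auto
  then have "\<not> inj ?type"
    using finite_ef_types finite_subset finite_imageD infinite_UNIV_nat by blast
  then obtain p q where "p \<noteq> q" "?type p = ?type q"
    unfolding inj_def by blast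
  then show ?thesis
    unfolding ef_equiv_def using dup_wins_if_same_ef_type by blast
qed

theorem lemma3p4:
  fixes a :: "'a::finite"
  shows "\<forall>k::nat. \<exists>p q::nat. p \<noteq> q \<and> ef_equiv k (replicate p a) (replicate q a)"
  using ef_equiv_pigeonhole[of k "\<lambda>p. replicate p a" for k] by blast

end
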